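(* Let $I$ be a countable set and let $C\subseteq[0,1]^I$ be a connected (in the product topology) chain from $0$ to $1$. Then there are continuous, surjective, nondecreasing functions $f_i:[0,1]\to[0,1]$, $i\in I$, such that $\{(f_i(t))_{i\in I}:t\in[0,1]\}=C$.
   Context: $[0,1]^I$ carries the coordinatewise (product) partial order. A chain from $0$ to $1$ in $[0,1]^I$ is a subset $C$ that is linearly ordered by this order and contains the constant tuples with values $0$ and $1$. *)

theory Defs
  imports "HOL-Analysis.Analysis"
begin

text \<open>Points of [0,1]^I are represented as extensional functions on I
  (elements of PiE I (\<lambda>_. {0..1})); the coordinatewise order on them.\<close>

definition coord_le :: "'i set \<Rightarrow> ('i \<Rightarrow> real) \<Rightarrow> ('i \<Rightarrow> real) \<Rightarrow> bool" where
  "coord_le I x y \<longleftrightarrow> (\<forall>i\<in>I. x i \<le> y i)"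

definition chain_0_1 :: "'i set \<Rightarrow> ('i \<Rightarrow> real) set \<Rightarrow> bool" where
  "chain_0_1 I C \<longleftrightarrow>
     C \<subseteq> (PiE I (\<lambda>_. {0..1::real})) \<and>
     (\<forall>x\<in>C. \<forall>y\<in>C. coord_le I x y \<or> coord_le I y x) \<and>
     (\<lambda>i\<in>I. 0) \<in> C \<and> (\<lambda>i\<in>I. 1) \<in> C"

end

theory Submission imports Defs begin

text \<open>Enumerate I injectively by e and send a point x of the cube to the real number
  s x = (\<Sum>i\<in>I. x i / 2 ^ e i). The map s is continuous on the product and strictly
  increasing along the chain, so it maps the connected chain C bijectively onto an interval
  [0, S]; its inverse, rescaled to [0,1], is a monotone parametrisation g of C. The
  coordinates of g are the required functions: each is nondecreasing and maps [0,1] onto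
  the i-th projection of C, which is [0,1] by connectedness, and a nondecreasing map of an
  interval onto an interval is continuous.\<close>

lemma mono_on_Icc_onto_Icc_imp_continuous_on:
  fixes h :: "real \<Rightarrow> real"
  assumes "a \<le> b" and mono: "mono_on {a..b} h" and onto: "h ` {a..b} = {c..d}"
  shows "continuous_on {a..b} h"
proof -
  \<comment> \<open>Extend h by translations to a monotone surjection of the real line, whose image is open.\<close>
  have "c \<le> d" using onto \<open>a \<le> b\<close> by (metis atLeastatMost_empty_iff2 image_is_empty)
  define H where "H t = (if t < a then c + (t - a) else if b < t then d + (t - b) else h t)" for t
  have h_in: "h t \<in> {c..d}" if "t \<in> {a..b}" for t using onto that by blast
  have "range H = UNIV"
  proof safe
    fix y :: real
    consider "y < c" | "d < y" | "y \<in> {c..d}" by force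
    then show "y \<in> range H"
    proof cases
      case 1
      then have "H (a + (y - c)) = y" by (simp add: H_def)
      then show ?thesis by (metis rangeI)
    next
      case 2
      then have "H (b + (y - d)) = y" using \<open>a \<le> b\<close> by (simp add: H_def)
      then show ?thesis by (metis rangeI)
    next
      case 3
      then obtain t where "t \<in> {a..b}" "h t = y" using onto by (metis imageE)
      then show ?thesis by (intro image_eqI[where x = t]) (auto simp: H_def)
    qed
  qed simp
  moreover have "H x \<le> H y" if "x \<le> y" for x y
    using that h_in[of x] h_in[of y] mono[THEN mono_onD, of x y] \<open>a \<le> b\<close> \<open>c \<le> d\<close>
    by (auto simp: H_def)
  ultimately have "continuous_on UNIV H"
    by (intro continuous_onI_mono) auto
  then have "continuous_on {a..b} H" by (rule continuous_on_subset) simp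
  then show ?thesis by (rule continuous_on_eq) (simp add: H_def)
qed

lemma summable_half_power_weighted:
  fixes a :: "nat \<Rightarrow> real"
  assumes "\<And>n. \<bar>a n\<bar> \<le> 1"
  shows "summable (\<lambda>n. (1/2)^n * a n)"
  by (rule summable_comparison_test'[OF summable_geometric[of "1/2"]])
     (use assms in \<open>auto simp: abs_mult intro!: mult_left_le\<close>)

lemma half_power_weighted_tail_bound:
  fixes a :: "nat \<Rightarrow> real"
  assumes bound: "\<And>n. \<bar>a n\<bar> \<le> 1"
  shows "\<bar>(\<Sum>n. (1/2)^n * a n) - (\<Sum>n<N. (1/2)^n * a n)\<bar> \<le> 2 * (1/2)^N"
proof -
  let ?t = "\<lambda>n. (1/2::real)^(n + N) * a (n + N)"
  have geom: "summable (\<lambda>n. (1/2::real)^(n + N))"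
    using summable_geometric[of "1/2::real"] by (intro summable_ignore_initial_segment) simp
  have abs_t: "summable (\<lambda>n. \<bar>?t n\<bar>)"
    using bound by (intro summable_comparison_test'[OF geom]) (auto simp: abs_mult intro!: mult_left_le)
  have "(\<Sum>n. (1/2)^n * a n) - (\<Sum>n<N. (1/2)^n * a n) = (\<Sum>n. ?t n)"
    using suminf_minus_initial_segment[OF summable_half_power_weighted[of a, OF bound]] by simp
  also have "\<bar>\<dots>\<bar> \<le> (\<Sum>n. \<bar>?t n\<bar>)" by (rule summable_rabs[OF abs_t])
  also have "\<dots> \<le> (\<Sum>n. (1/2::real)^(n + N))"
    using bound abs_t geom by (intro suminf_le) (auto simp: abs_mult intro!: mult_left_le)
  also have "\<dots> = (1/2)^N * (\<Sum>n. (1/2::real)^n)"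
    using suminf_mult[OF summable_geometric[of "1/2::real"], of "(1/2)^N"]
    by (simp add: power_add mult.commute)
  also have "\<dots> = 2 * (1/2)^N" by (simp add: suminf_geometric)
  finally show ?thesis .
qed

lemma continuous_map_real_uniform_limit:
  fixes f :: "nat \<Rightarrow> 'a \<Rightarrow> real"
  assumes "\<And>N. continuous_map X euclideanreal (f N)"
    and "\<And>N x. x \<in> topspace X \<Longrightarrow> \<bar>f N x - g x\<bar> \<le> r N"
    and "r \<longlonglongrightarrow> 0"
  shows "continuous_map X euclideanreal g"
proof -
  have "continuous_map X Met_TC.mtopology g"
  proof (rule Met_TC.continuous_map_uniform_limit_alt[where F = sequentially and f = f])
    fix \<epsilon> :: real assume "0 < \<epsilon>"
    with \<open>r \<longlonglongrightarrow> 0\<close> have "\<forall>\<^sub>F N in sequentially. r N < \<epsilon>"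
      by (simp add: order_tendsto_iff)
    then show "\<forall>\<^sub>F N in sequentially. \<forall>x\<in>topspace X. dist (f N x) (g x) < \<epsilon>"
      by eventually_elim (auto simp: dist_real_def intro: le_less_trans[OF assms(2)])
  qed (use assms(1) in auto)
  then show ?thesis by simp
qed

lemma continuous_map_product_coordinate:
  "i \<in> I \<Longrightarrow> continuous_map (product_topology (\<lambda>i. top_of_set (S i)) I) euclideanreal (\<lambda>x. x i)"
  using continuous_map_product_projection[of i I "\<lambda>i. top_of_set (S i)"]
  by (simp add: continuous_map_in_subtopology)

text \<open>For e injective on I, weighted_coord_sum I e x = (\<Sum>i\<in>I. x i / 2 ^ e i), written as a
  series over the naturals in which the indices outside e ` I contribute 0.\<close>

definition enum_coord :: "'i set \<Rightarrow> ('i \<Rightarrow> nat) \<Rightarrow> ('i \<Rightarrow> real) \<Rightarrow> nat \<Rightarrow> real" where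
  "enum_coord I e x n = (if n \<in> e ` I then x (inv_into I e n) else 0)"

definition weighted_coord_sum :: "'i set \<Rightarrow> ('i \<Rightarrow> nat) \<Rightarrow> ('i \<Rightarrow> real) \<Rightarrow> real" where
  "weighted_coord_sum I e x = (\<Sum>n. (1/2)^n * enum_coord I e x n)"

lemma abs_enum_coord_le_1:
  "x \<in> PiE I (\<lambda>_. {0..1}) \<Longrightarrow> \<bar>enum_coord I e x n\<bar> \<le> 1"
  by (auto simp: enum_coord_def PiE_iff inv_into_into)

lemma enum_coord_mono: "coord_le I x y \<Longrightarrow> enum_coord I e x n \<le> enum_coord I e y n"
  by (auto simp: enum_coord_def coord_le_def inv_into_into)

lemma enum_coord_enum: "inj_on e I \<Longrightarrow> i \<in> I \<Longrightarrow> enum_coord I e x (e i) = x i"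
  by (simp add: enum_coord_def)

lemma summable_weighted_coords:
  "x \<in> PiE I (\<lambda>_. {0..1}) \<Longrightarrow> summable (\<lambda>n. (1/2)^n * enum_coord I e x n)"
  by (rule summable_half_power_weighted) (rule abs_enum_coord_le_1)

lemma weighted_coord_sum_const_0: "weighted_coord_sum I e (\<lambda>i\<in>I. 0) = 0"
proof -
  have "enum_coord I e (\<lambda>i\<in>I. 0) n = 0" for n
    by (auto simp: enum_coord_def inv_into_into)
  then show ?thesis by (simp add: weighted_coord_sum_def)
qed

lemma weighted_coord_sum_mono:
  assumes "x \<in> PiE I (\<lambda>_. {0..1})" "y \<in> PiE I (\<lambda>_. {0..1})" "coord_le I x y"
  shows "weighted_coord_sum I e x \<le> weighted_coord_sum I e y"
  unfolding weighted_coord_sum_def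
proof (rule suminf_le)
  show "(1/2)^n * enum_coord I e x n \<le> (1/2)^n * enum_coord I e y n" for n
    using enum_coord_mono[OF assms(3)] by (simp add: mult_left_mono)
qed (use assms in \<open>simp_all add: summable_weighted_coords\<close>)

lemma weighted_coord_sum_strict_mono:
  assumes "inj_on e I" and x: "x \<in> PiE I (\<lambda>_. {0..1})" and y: "y \<in> PiE I (\<lambda>_. {0..1})"
    and le: "coord_le I x y" and "x \<noteq> y"
  shows "weighted_coord_sum I e x < weighted_coord_sum I e y"
proof -
  obtain i where i: "i \<in> I" "x i \<noteq> y i" using x y \<open>x \<noteq> y\<close> by (meson PiE_ext)
  let ?d = "\<lambda>n. (1/2)^n * enum_coord I e y n - (1/2)^n * enum_coord I e x n"
  have "0 < suminf ?d"
  proof (rule suminf_pos2)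
    show "summable ?d" using x y by (intro summable_diff summable_weighted_coords)
    show "0 \<le> ?d n" for n using enum_coord_mono[OF le] by simp
    have "x i < y i" using i le by (force simp: coord_le_def)
    then show "0 < ?d (e i)" using i by (simp add: enum_coord_enum[OF \<open>inj_on e I\<close>])
  qed
  also have "suminf ?d = weighted_coord_sum I e y - weighted_coord_sum I e x"
    unfolding weighted_coord_sum_def using x y by (simp add: suminf_diff summable_weighted_coords)
  finally show ?thesis by simp
qed

lemma continuous_map_enum_coord:
  "continuous_map (product_topology (\<lambda>i. top_of_set {0..1::real}) I) euclideanreal
     (\<lambda>x. enum_coord I e x n)"
proof (cases "n \<in> e ` I")
  case True
  then have "inv_into I e n \<in> I" by (rule inv_into_into)
  then show ?thesis using True by (simp add: enum_coord_def continuous_map_product_coordinate)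
qed (simp add: enum_coord_def)

lemma continuous_map_weighted_coord_sum:
  "continuous_map (product_topology (\<lambda>i. top_of_set {0..1::real}) I) euclideanreal
     (weighted_coord_sum I e)"
proof (rule continuous_map_real_uniform_limit)
  show "continuous_map (product_topology (\<lambda>i. top_of_set {0..1::real}) I) euclideanreal
      (\<lambda>x. \<Sum>n<N. (1/2)^n * enum_coord I e x n)" for N
    by (auto intro!: continuous_intros continuous_map_enum_coord)
  show "\<bar>(\<Sum>n<N. (1/2)^n * enum_coord I e x n) - weighted_coord_sum I e x\<bar> \<le> 2 * (1/2)^N"
    if "x \<in> topspace (product_topology (\<lambda>i. top_of_set {0..1::real}) I)" for N x
    using half_power_weighted_tail_bound[of "enum_coord I e x" N, OF abs_enum_coord_le_1] that
    by (simp add: weighted_coord_sum_def abs_minus_commute)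
  show "(\<lambda>N. 2 * (1/2::real)^N) \<longlonglongrightarrow> 0"
    using tendsto_mult_right_zero[OF LIMSEQ_power_zero[of "1/2::real"]] by simp
qed

lemma connectedin_real_image_eq_Icc:
  assumes "connectedin X C" "continuous_map X euclideanreal s" "a \<in> C" "b \<in> C"
    and "\<And>x. x \<in> C \<Longrightarrow> s a \<le> s x \<and> s x \<le> s b"
  shows "s ` C = {s a..s b}"
proof
  show "s ` C \<subseteq> {s a..s b}" using assms(5) by auto
  have "connected (s ` C)"
    using connectedin_continuous_map_image[OF assms(2,1)] by simp
  then show "{s a..s b} \<subseteq> s ` C"
    using assms(3,4) by (intro connected_contains_Icc) auto
qed

lemma chain_projection_eq_Icc:
  assumes "chain_0_1 I C" "connectedin (product_topology (\<lambda>i. top_of_set {0..1::real}) I) C"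
    and "i \<in> I"
  shows "(\<lambda>x. x i) ` C = {0..1}"
proof -
  note proj = continuous_map_product_coordinate[OF \<open>i \<in> I\<close>, of "\<lambda>_. {0..1}"]
  have C_cube: "C \<subseteq> PiE I (\<lambda>_. {0..1})" and ends: "(\<lambda>i\<in>I. 0) \<in> C" "(\<lambda>i\<in>I. 1) \<in> C"
    using assms(1) by (auto simp: chain_0_1_def)
  have "(\<lambda>x. x i) ` C = {(\<lambda>i\<in>I. 0::real) i..(\<lambda>i\<in>I. 1::real) i}"
    using C_cube \<open>i \<in> I\<close>
    by (intro connectedin_real_image_eq_Icc[OF assms(2) proj ends]) (auto simp: PiE_iff)
  then show ?thesis using \<open>i \<in> I\<close> by simp
qed

lemma chain_monotone_parametrisation:
  fixes s :: "'a \<Rightarrow> real"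
  assumes total: "\<And>x y. x \<in> C \<Longrightarrow> y \<in> C \<Longrightarrow> le x y \<or> le y x"
    and strict: "\<And>x y. x \<in> C \<Longrightarrow> y \<in> C \<Longrightarrow> le x y \<Longrightarrow> x \<noteq> y \<Longrightarrow> s x < s y"
    and onto: "s ` C = {0..S}" and "C \<noteq> {}"
  obtains g :: "real \<Rightarrow> 'a" where "g ` {0..1} = C"
    and "\<And>t t'. t \<in> {0..1} \<Longrightarrow> t' \<in> {0..1} \<Longrightarrow> t \<le> t' \<Longrightarrow> le (g t) (g t')"
proof
  obtain x where "x \<in> C" using \<open>C \<noteq> {}\<close> by blast
  then have "s x \<in> {0..S}" using onto by blast
  then have "0 \<le> S" by simp
  have "inj_on s C"
    by (rule inj_onI) (metis total strict order_less_irrefl)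
  define g where "g t = inv_into C s (S * t)" for t
  have S_t: "S * t \<in> s ` C" if "t \<in> {0..1}" for t
    using that \<open>0 \<le> S\<close> onto by (auto simp: mult_left_le)
  have g_in: "g t \<in> C" and s_g: "s (g t) = S * t" if "t \<in> {0..1}" for t
    using S_t[OF that] unfolding g_def by (auto intro: inv_into_into f_inv_into_f)
  show "g ` {0..1} = C"
  proof
    show "g ` {0..1} \<subseteq> C" using g_in by blast
    show "C \<subseteq> g ` {0..1}"
    proof
      fix x assume "x \<in> C"
      then have s_x: "s x \<in> {0..S}" using onto by blast
      define t where "t = (if S = 0 then 0 else s x / S)"
      have "t \<in> {0..1}" "S * t = s x" using s_x by (auto simp: t_def)
      moreover have "g t = x" using \<open>S * t = s x\<close> \<open>inj_on s C\<close> \<open>x \<in> C\<close> by (simp add: g_def)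
      ultimately show "x \<in> g ` {0..1}" by blast
    qed
  qed
  show "le (g t) (g t')" if "t \<in> {0..1}" "t' \<in> {0..1}" "t \<le> t'" for t t'
  proof (rule ccontr)
    assume "\<not> le (g t) (g t')"
    then have "s (g t') < s (g t)"
      using that g_in total strict by metis
    moreover have "S * t \<le> S * t'" using \<open>t \<le> t'\<close> \<open>0 \<le> S\<close> by (rule mult_left_mono)
    ultimately show False using that s_g by simp
  qed
qed

theorem mainTheorem16:
  fixes I :: "'i set" and C :: "('i \<Rightarrow> real) set"
  assumes "countable I"
    and "chain_0_1 I C"
    and "connectedin (product_topology (\<lambda>i. top_of_set {0..1::real}) I) C"
  shows "\<exists>f :: 'i \<Rightarrow> real \<Rightarrow> real.
           (\<forall>i\<in>I. continuous_on {0..1} (f i) \<and> f i ` {0..1} = {0..1}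
                   \<and> mono_on {0..1} (f i))
           \<and> (\<lambda>t. \<lambda>i\<in>I. f i t) ` {0..1} = C"
proof -
  let ?s = "weighted_coord_sum I (to_nat_on I)"
  have C_cube: "C \<subseteq> PiE I (\<lambda>_. {0..1})"
    and total: "\<And>x y. x \<in> C \<Longrightarrow> y \<in> C \<Longrightarrow> coord_le I x y \<or> coord_le I y x"
    and ends: "(\<lambda>i\<in>I. 0) \<in> C" "(\<lambda>i\<in>I. 1) \<in> C"
    using assms(2) by (auto simp: chain_0_1_def)
  have "?s ` C = {?s (\<lambda>i\<in>I. 0)..?s (\<lambda>i\<in>I. 1)}"
    using C_cube ends
    by (intro connectedin_real_image_eq_Icc[OF assms(3) continuous_map_weighted_coord_sum ends])
       (auto intro!: weighted_coord_sum_mono simp: coord_le_def PiE_iff)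
  moreover have "?s x < ?s y" if "x \<in> C" "y \<in> C" "coord_le I x y" "x \<noteq> y" for x y
    using that C_cube inj_on_to_nat_on[OF assms(1)] weighted_coord_sum_strict_mono by blast
  ultimately obtain g :: "real \<Rightarrow> 'i \<Rightarrow> real" where g_onto: "g ` {0..1} = C"
    and g_mono: "\<And>t t'. t \<in> {0..1} \<Longrightarrow> t' \<in> {0..1} \<Longrightarrow> t \<le> t' \<Longrightarrow> coord_le I (g t) (g t')"
    using total chain_monotone_parametrisation[of C "coord_le I" ?s] ends(1)
    unfolding weighted_coord_sum_const_0 by blast
  have mono: "mono_on {0..1} (\<lambda>t. g t i)" if "i \<in> I" for i
    using g_mono that by (auto intro!: mono_onI simp: coord_le_def)
  have onto: "(\<lambda>t. g t i) ` {0..1} = {0..1}" if "i \<in> I" for i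
    using chain_projection_eq_Icc[OF assms(2,3) that] g_onto image_image[of "\<lambda>x. x i" g "{0..1}"]
    by simp
  have cont: "continuous_on {0..1} (\<lambda>t. g t i)" if "i \<in> I" for i
    by (rule mono_on_Icc_onto_Icc_imp_continuous_on[OF zero_le_one mono[OF that] onto[OF that]])
  have param: "(\<lambda>t. \<lambda>i\<in>I. g t i) ` {0..1} = C"
    using g_onto C_cube by (auto intro!: image_cong PiE_restrict simp flip: g_onto)
  show ?thesis
    by (intro exI[of _ "\<lambda>i t. g t i"] conjI ballI cont mono onto param)
qed

end
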